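(* For any single-elimination tournament $\mathcal{T}$, any scoring system $\sigma$, and any bracket $\widehat{B}$ of $\mathcal{T}$, the set $\{\widehat{B}_a:a\in P(\mathcal{T})\}$ is a $\sigma$-resolving set.
   Context: A single-elimination tournament is a finite directed graph $\mathcal{T}$ such that: (a) $\mathcal{T}$ has exactly one sink (vertex with no out-neighbours); (b) every non-sink vertex has exactly one out-neighbour; (c) $\mathcal{T}$ has no directed cycles; (d) $|N^-(v)|\ne 1$ for every vertex $v$, where $N^-(v)$ denotes the set of in-neighbours of $v$. The players $P(\mathcal{T})$ are the sources and the matches are $M(\mathcal{T})=V(\mathcal{T})\setminus P(\mathcal{T})$. For a vertex $u$, $P(u)$ is the set of players $c$ for which there is a directed walk from $c$ to $u$ (length $0$ allowed). A bracket is a function $B:V(\mathcal{T})\to P(\mathcal{T})$ with $B(c)=c$ for every player $c$ and $B(x)\in\{B(u):u\in N^-(x)\}$ for every match $x$. For a bracket $\widehat{B}$ and player $a$, $\widehat{B}_a$ is the bracket with $\widehat{B}_a(u)=a$ if $a\in P(u)$ and $\widehat{B}_a(u)=\widehat{B}(u)$ otherwise. A scoring system is any function $\sigma:M(\mathcal{T})\to\mathbb{R}_{>0}$, and $\mathrm{score}_\sigma(B,B')=\sum_{x\in M(\mathcal{T}):\,B(x)=B'(x)}\sigma(x)$. A set of brackets $\mathcal{B}$ is $\sigma$-resolving if for every pair of distinct brackets $B\ne B'$ there is $B_i\in\mathcal{B}$ with $\mathrm{score}_\sigma(B_i,B)\ne\mathrm{score}_\sigma(B_i,B')$. *)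

theory Defs
  imports Complex_Main
begin

definition in_nbrs :: "'v set \<Rightarrow> ('v \<times> 'v) set \<Rightarrow> 'v \<Rightarrow> 'v set" where
  "in_nbrs V E v = {u \<in> V. (u, v) \<in> E}"

definition out_nbrs :: "'v set \<Rightarrow> ('v \<times> 'v) set \<Rightarrow> 'v \<Rightarrow> 'v set" where
  "out_nbrs V E v = {w \<in> V. (v, w) \<in> E}"

definition sinks :: "'v set \<Rightarrow> ('v \<times> 'v) set \<Rightarrow> 'v set" where
  "sinks V E = {v \<in> V. out_nbrs V E v = {}}"

definition single_elim_tournament :: "'v set \<Rightarrow> ('v \<times> 'v) set \<Rightarrow> bool" where
  "single_elim_tournament V E \<longleftrightarrow>
     finite V \<and> E \<subseteq> V \<times> V \<and>
     card (sinks V E) = 1 \<and>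
     (\<forall>v \<in> V - sinks V E. card (out_nbrs V E v) = 1) \<and>
     acyclic E \<and>
     (\<forall>v \<in> V. card (in_nbrs V E v) \<noteq> 1)"

definition players :: "'v set \<Rightarrow> ('v \<times> 'v) set \<Rightarrow> 'v set" where
  "players V E = {v \<in> V. in_nbrs V E v = {}}"

definition matches :: "'v set \<Rightarrow> ('v \<times> 'v) set \<Rightarrow> 'v set" where
  "matches V E = V - players V E"

definition players_of :: "'v set \<Rightarrow> ('v \<times> 'v) set \<Rightarrow> 'v \<Rightarrow> 'v set" where
  "players_of V E u = {c \<in> players V E. (c, u) \<in> E\<^sup>*}"

text \<open>A bracket is a function on V (values outside V are irrelevant).\<close>
definition bracket :: "'v set \<Rightarrow> ('v \<times> 'v) set \<Rightarrow> ('v \<Rightarrow> 'v) \<Rightarrow> bool" where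
  "bracket V E B \<longleftrightarrow>
     (\<forall>v \<in> V. B v \<in> players V E) \<and>
     (\<forall>c \<in> players V E. B c = c) \<and>
     (\<forall>x \<in> matches V E. B x \<in> B ` in_nbrs V E x)"

definition bracket_win :: "'v set \<Rightarrow> ('v \<times> 'v) set \<Rightarrow> ('v \<Rightarrow> 'v) \<Rightarrow> 'v \<Rightarrow> ('v \<Rightarrow> 'v)" where
  "bracket_win V E B a = (\<lambda>u. if a \<in> players_of V E u then a else B u)"

definition scoring_system :: "'v set \<Rightarrow> ('v \<times> 'v) set \<Rightarrow> ('v \<Rightarrow> real) \<Rightarrow> bool" where
  "scoring_system V E \<sigma> \<longleftrightarrow> (\<forall>x \<in> matches V E. \<sigma> x > 0)"

definition score :: "'v set \<Rightarrow> ('v \<times> 'v) set \<Rightarrow> ('v \<Rightarrow> real) \<Rightarrow> ('v \<Rightarrow> 'v) \<Rightarrow> ('v \<Rightarrow> 'v) \<Rightarrow> real" where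
  "score V E \<sigma> B B' = (\<Sum>x \<in> {x \<in> matches V E. B x = B' x}. \<sigma> x)"

definition resolving :: "'v set \<Rightarrow> ('v \<times> 'v) set \<Rightarrow> ('v \<Rightarrow> real) \<Rightarrow> ('v \<Rightarrow> 'v) set \<Rightarrow> bool" where
  "resolving V E \<sigma> \<B> \<longleftrightarrow>
     (\<forall>B B'. bracket V E B \<longrightarrow> bracket V E B' \<longrightarrow> (\<exists>v \<in> V. B v \<noteq> B' v) \<longrightarrow>
        (\<exists>Bi \<in> \<B>. score V E \<sigma> Bi B \<noteq> score V E \<sigma> Bi B'))"

end

theory Submission
  imports Defs
begin

text \<open>Given brackets B \<noteq> B', pick a match x0 on which they disagree but below which
  they agree, and let p = B x0, q = B' x0. Any disagreement that p or q can reach lies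
  above x0, so it is reached by both: there Bh_p predicts p, which B' cannot have there,
  and Bh_q predicts q, which B cannot have there. Elsewhere Bh_p and Bh_q coincide or
  B and B' agree. Hence, match by match, the advantage of B over B' as scored against
  Bh_p dominates that against Bh_q, strictly at x0, so one of the two advantages is
  nonzero.\<close>

lemma single_valued_acyclic_common_successor:
  assumes sv: "single_valued r" and acyc: "acyclic r"
    and "(p, w) \<in> r\<^sup>*" "(p, y) \<in> r\<^sup>*" and wz: "(w, z) \<in> r" and yz: "(y, z) \<in> r"
  shows "w = y"
proof -
  have "u = v" if "(u, v) \<in> r\<^sup>*" "(u, z) \<in> r" "(v, z) \<in> r" for u v
  proof (rule ccontr)
    assume "u \<noteq> v"
    with \<open>(u, v) \<in> r\<^sup>*\<close> obtain c where "(u, c) \<in> r" "(c, v) \<in> r\<^sup>*"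
      by (metis converse_rtranclE)
    with sv \<open>(u, z) \<in> r\<close> have "(z, v) \<in> r\<^sup>*"
      by (metis single_valuedD)
    with \<open>(v, z) \<in> r\<close> have "(z, z) \<in> r\<^sup>+" by auto
    with acyc show False unfolding acyclic_def by blast
  qed
  with single_valued_confluent[OF sv assms(3,4)] wz yz show ?thesis by metis
qed

lemma bracket_win_apply:
  assumes "a \<in> players V E"
  shows "bracket_win V E Bh a x = (if (a, x) \<in> E\<^sup>* then a else Bh x)"
  using assms unfolding bracket_win_def players_of_def by auto

definition match_margin ::
    "('v \<Rightarrow> real) \<Rightarrow> ('v \<Rightarrow> 'v) \<Rightarrow> ('v \<Rightarrow> 'v) \<Rightarrow> ('v \<Rightarrow> 'v) \<Rightarrow> 'v \<Rightarrow> real" where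
  "match_margin \<sigma> B B' W x = (if W x = B x then \<sigma> x else 0) - (if W x = B' x then \<sigma> x else 0)"

lemma score_diff_eq_sum_match_margin:
  assumes "finite V"
  shows "score V E \<sigma> W B - score V E \<sigma> W B' = (\<Sum>x\<in>matches V E. match_margin \<sigma> B B' W x)"
proof -
  have "finite (matches V E)" using assms unfolding matches_def by simp
  then show ?thesis
    unfolding score_def match_margin_def by (simp add: sum.inter_filter sum_subtractf)
qed

locale tournament =
  fixes V :: "'v set" and E :: "('v \<times> 'v) set"
  assumes single_elim: "single_elim_tournament V E"
begin

lemma finite_V: "finite V"
  and E_subset: "E \<subseteq> V \<times> V"
  and acyclic_E: "acyclic E"
  using single_elim unfolding single_elim_tournament_def by auto

lemma wf_E: "wf E"
proof -
  have "finite E" using finite_subset[OF E_subset] finite_V by blast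
  with acyclic_E show ?thesis by (simp add: finite_acyclic_wf)
qed

lemma single_valued_E: "single_valued E"
proof (rule single_valuedI)
  fix v a b assume "(v, a) \<in> E" "(v, b) \<in> E"
  with E_subset have out: "a \<in> out_nbrs V E v" "b \<in> out_nbrs V E v" "v \<in> V"
    unfolding out_nbrs_def by auto
  then have "v \<in> V - sinks V E" unfolding sinks_def by auto
  with single_elim have "card (out_nbrs V E v) = 1"
    unfolding single_elim_tournament_def by auto
  with out show "a = b" by (metis card_1_singletonE singletonD)
qed

lemma common_successor:
  "(p, w) \<in> E\<^sup>* \<Longrightarrow> (p, y) \<in> E\<^sup>* \<Longrightarrow> (w, z) \<in> E \<Longrightarrow> (y, z) \<in> E \<Longrightarrow> w = y"
  using single_valued_acyclic_common_successor[OF single_valued_E acyclic_E] by blast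

lemma edge_target_in_matches:
  assumes "(u, x) \<in> E"
  shows "x \<in> matches V E"
  using assms E_subset unfolding matches_def players_def in_nbrs_def by auto

lemma bracket_at_match:
  assumes "bracket V E B" "x \<in> matches V E"
  obtains u where "(u, x) \<in> E" "B x = B u"
  using assms unfolding bracket_def in_nbrs_def by auto

lemma bracket_reaches:
  assumes B: "bracket V E B" and "x \<in> V"
  shows "(B x, x) \<in> E\<^sup>*"
  using \<open>x \<in> V\<close>
proof (induction x rule: wf_induct[OF wf_E])
  case (1 x)
  show ?case
  proof (cases "x \<in> players V E")
    case True
    with B show ?thesis unfolding bracket_def by auto
  next
    case False
    with 1 have "x \<in> matches V E" unfolding matches_def by auto
    with B obtain u where "(u, x) \<in> E" "B x = B u" by (rule bracket_at_match)
    with 1 E_subset show ?thesis by (auto intro: rtrancl_into_rtrancl)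
  qed
qed

lemma bracket_winner_descends:
  assumes B: "bracket V E B" and p: "(p, x) \<in> E\<^sup>*" and xy: "(x, y) \<in> E\<^sup>*" and "B y = p"
  shows "B x = p"
  using xy \<open>B y = p\<close>
proof (induction rule: rtrancl_induct)
  case base
  then show ?case .
next
  case (step y z)
  from step.hyps(2) have "z \<in> matches V E" by (rule edge_target_in_matches)
  with B obtain w where wz: "(w, z) \<in> E" and "B z = B w" by (rule bracket_at_match)
  with step.prems have "(p, w) \<in> E\<^sup>*"
    using bracket_reaches[OF B] E_subset by auto
  moreover have "(p, y) \<in> E\<^sup>*" using p step.hyps(1) by simp
  ultimately have "w = y" using common_successor wz step.hyps(2) by blast
  with \<open>B z = B w\<close> step.prems show ?case by (intro step.IH) simp
qed

definition min_disagreement :: "('v \<Rightarrow> 'v) \<Rightarrow> ('v \<Rightarrow> 'v) \<Rightarrow> 'v \<Rightarrow> bool" where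
  "min_disagreement B B' x0 \<longleftrightarrow>
     x0 \<in> V \<and> B x0 \<noteq> B' x0 \<and> (\<forall>y. (y, x0) \<in> E\<^sup>+ \<longrightarrow> B y = B' y)"

lemma min_disagreement_exists:
  assumes "x \<in> V" "B x \<noteq> B' x"
  obtains x0 where "min_disagreement B B' x0"
proof -
  from assms have "x \<in> {v \<in> V. B v \<noteq> B' v}" by simp
  then obtain x0 where x0: "x0 \<in> {v \<in> V. B v \<noteq> B' v}"
    and below: "\<And>y. (y, x0) \<in> E\<^sup>+ \<Longrightarrow> y \<notin> {v \<in> V. B v \<noteq> B' v}"
    by (rule wfE_min[OF wf_trancl[OF wf_E]]) iprover+
  have "B y = B' y" if "(y, x0) \<in> E\<^sup>+" for y
  proof -
    have "y \<in> V" using trancl_subset_Sigma[OF E_subset] that by blast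
    with below[OF that] show ?thesis by simp
  qed
  with x0 show ?thesis by (intro that[of x0]) (simp add: min_disagreement_def)
qed

lemma min_disagreement_reaches:
  assumes x0: "min_disagreement B B' x0" and "(a, x0) \<in> E\<^sup>*" "(a, x) \<in> E\<^sup>*" "B x \<noteq> B' x"
  shows "(x0, x) \<in> E\<^sup>*"
  using single_valued_confluent[OF single_valued_E assms(2,3)]
proof
  assume "(x, x0) \<in> E\<^sup>*"
  moreover have "(x, x0) \<notin> E\<^sup>+"
    using x0 \<open>B x \<noteq> B' x\<close> unfolding min_disagreement_def by blast
  ultimately show ?thesis by (metis rtranclD rtrancl.rtrancl_refl)
qed

lemma match_margin_le:
  assumes B: "bracket V E B" and B': "bracket V E B'" and x0: "min_disagreement B B' x0"
    and "\<sigma> x \<ge> 0"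
  shows "match_margin \<sigma> B B' (bracket_win V E Bh (B' x0)) x
           \<le> match_margin \<sigma> B B' (bracket_win V E Bh (B x0)) x"
proof (cases "B x = B' x")
  case True
  then show ?thesis by (simp add: match_margin_def)
next
  case False
  define p q where "p = B x0" and "q = B' x0"
  have "x0 \<in> V" and "p \<noteq> q" using x0 unfolding min_disagreement_def p_def q_def by auto
  then have players: "p \<in> players V E" "q \<in> players V E"
    using B B' unfolding bracket_def p_def q_def by auto
  have px0: "(p, x0) \<in> E\<^sup>*" and qx0: "(q, x0) \<in> E\<^sup>*"
    using bracket_reaches[OF B \<open>x0 \<in> V\<close>] bracket_reaches[OF B' \<open>x0 \<in> V\<close>] p_def q_def by auto
  have reach: "(c, x) \<in> E\<^sup>* \<longleftrightarrow> (x0, x) \<in> E\<^sup>*" if "(c, x0) \<in> E\<^sup>*" for c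
    using min_disagreement_reaches[OF x0 that _ False] that by auto
  show ?thesis
  proof (cases "(x0, x) \<in> E\<^sup>*")
    case True
    have "B' x \<noteq> p"
      using bracket_winner_descends[OF B' px0 True] \<open>p \<noteq> q\<close> q_def by auto
    moreover have "B x \<noteq> q"
      using bracket_winner_descends[OF B qx0 True] \<open>p \<noteq> q\<close> p_def by auto
    ultimately show ?thesis
      using True reach[OF px0] reach[OF qx0] \<open>\<sigma> x \<ge> 0\<close>
      by (simp add: match_margin_def bracket_win_apply[OF players(1)]
          bracket_win_apply[OF players(2)] p_def[symmetric] q_def[symmetric])
  next
    case False
    then show ?thesis
      using reach[OF px0] reach[OF qx0]
      by (simp add: match_margin_def bracket_win_apply[OF players(1)]
          bracket_win_apply[OF players(2)] p_def[symmetric] q_def[symmetric])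
  qed
qed

lemma bracket_win_separates:
  assumes B: "bracket V E B" and B': "bracket V E B'" and \<sigma>: "scoring_system V E \<sigma>"
    and x0: "min_disagreement B B' x0"
  shows "score V E \<sigma> (bracket_win V E Bh (B' x0)) B - score V E \<sigma> (bracket_win V E Bh (B' x0)) B'
          < score V E \<sigma> (bracket_win V E Bh (B x0)) B - score V E \<sigma> (bracket_win V E Bh (B x0)) B'"
  unfolding score_diff_eq_sum_match_margin[OF finite_V]
proof (rule sum_strict_mono_ex1)
  show "finite (matches V E)" using finite_V unfolding matches_def by simp
  show "\<forall>x\<in>matches V E. match_margin \<sigma> B B' (bracket_win V E Bh (B' x0)) x
                        \<le> match_margin \<sigma> B B' (bracket_win V E Bh (B x0)) x"
    using match_margin_le[OF B B' x0] \<sigma> unfolding scoring_system_def by (simp add: less_imp_le)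
  have "x0 \<in> V" "B x0 \<noteq> B' x0" using x0 unfolding min_disagreement_def by auto
  then have "x0 \<in> matches V E" "B x0 \<in> players V E" "B' x0 \<in> players V E"
    using B B' unfolding bracket_def matches_def by auto
  moreover have "(B x0, x0) \<in> E\<^sup>*" "(B' x0, x0) \<in> E\<^sup>*"
    using bracket_reaches[OF B \<open>x0 \<in> V\<close>] bracket_reaches[OF B' \<open>x0 \<in> V\<close>] .
  ultimately show "\<exists>x\<in>matches V E. match_margin \<sigma> B B' (bracket_win V E Bh (B' x0)) x
                        < match_margin \<sigma> B B' (bracket_win V E Bh (B x0)) x"
    using \<sigma> \<open>B x0 \<noteq> B' x0\<close> unfolding scoring_system_def
    by (intro bexI[of _ x0]) (auto simp: match_margin_def bracket_win_apply)
qed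

end

theorem corollary5p14:
  fixes V :: "'v set" and E :: "('v \<times> 'v) set" and \<sigma> :: "'v \<Rightarrow> real" and Bh :: "'v \<Rightarrow> 'v"
  assumes "single_elim_tournament V E"
    and "scoring_system V E \<sigma>"
    and "bracket V E Bh"
  shows "resolving V E \<sigma> {bracket_win V E Bh a | a. a \<in> players V E}"
  unfolding resolving_def
proof (intro allI impI)
  interpret tournament V E by (rule tournament.intro) (fact assms(1))
  fix B B'
  assume B: "bracket V E B" and B': "bracket V E B'" and "\<exists>v\<in>V. B v \<noteq> B' v"
  then obtain x0 where x0: "min_disagreement B B' x0" by (metis min_disagreement_exists)
  then have "B x0 \<in> players V E" "B' x0 \<in> players V E"
    using B B' unfolding min_disagreement_def bracket_def by auto
  moreover have "score V E \<sigma> (bracket_win V E Bh (B x0)) B \<noteq> score V E \<sigma> (bracket_win V E Bh (B x0)) B'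
      \<or> score V E \<sigma> (bracket_win V E Bh (B' x0)) B \<noteq> score V E \<sigma> (bracket_win V E Bh (B' x0)) B'"
    using bracket_win_separates[OF B B' assms(2) x0, where Bh = Bh] by linarith
  ultimately show "\<exists>Bi\<in>{bracket_win V E Bh a | a. a \<in> players V E}.
                     score V E \<sigma> Bi B \<noteq> score V E \<sigma> Bi B'"
    by blast
qed

end
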